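(* Let $0<R<1$ and let $f$ be a circular tractrix with parameter $R$ and constants $c_1^2-c_2^2=1$. Then $f$ is closed, i.e. there exists $P>0$ with $f(t+P)=f(t)$ for all $t\in\mathbb R$, if and only if $\sqrt{1-R^2}\in\mathbb Q$.
   Context: Fix $0<R<1$, $\lambda=\frac{\sqrt{1-R^2}}{R}$, and real constants $c_1,c_2$ with $c_1^2-c_2^2=1$. The circular tractrix is $f(t)=\big(\xi_1\cos\tfrac tR+\xi_2\sin\tfrac tR,\ -\xi_2\cos\tfrac tR+\xi_1\sin\tfrac tR,\ \xi_3\big)$, $t\in\mathbb R$, with $\xi_1=\frac{(R-\frac1R)\cos\lambda t}{\frac{c_1}{R}+\cos\lambda t}$, $\xi_2=-\frac{\lambda\sin\lambda t}{\frac{c_1}{R}+\cos\lambda t}$, $\xi_3=\frac{\lambda c_2}{\frac{c_1}{R}+\cos\lambda t}$. *)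

theory Defs
  imports Complex_Main
begin

definition tr_lambda :: "real \<Rightarrow> real" where
  "tr_lambda R = sqrt (1 - R\<^sup>2) / R"

definition tr_xi1 :: "real \<Rightarrow> real \<Rightarrow> real \<Rightarrow> real" where
  "tr_xi1 R c1 t = ((R - 1 / R) * cos (tr_lambda R * t)) / (c1 / R + cos (tr_lambda R * t))"

definition tr_xi2 :: "real \<Rightarrow> real \<Rightarrow> real \<Rightarrow> real" where
  "tr_xi2 R c1 t = - (tr_lambda R * sin (tr_lambda R * t)) / (c1 / R + cos (tr_lambda R * t))"

definition tr_xi3 :: "real \<Rightarrow> real \<Rightarrow> real \<Rightarrow> real \<Rightarrow> real" where
  "tr_xi3 R c1 c2 t = (tr_lambda R * c2) / (c1 / R + cos (tr_lambda R * t))"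

definition circular_tractrix :: "real \<Rightarrow> real \<Rightarrow> real \<Rightarrow> real \<Rightarrow> real \<times> real \<times> real" where
  "circular_tractrix R c1 c2 t =
     (tr_xi1 R c1 t * cos (t / R) + tr_xi2 R c1 t * sin (t / R),
      - tr_xi2 R c1 t * cos (t / R) + tr_xi1 R c1 t * sin (t / R),
      tr_xi3 R c1 c2 t)"

end

theory Submission imports Defs begin

text \<open>The squared distance of \<open>f(t)\<close> from the origin equals
  \<open>(1 - R\<^sup>2) (a - cos \<lambda>t) / (a + cos \<lambda>t)\<close> with \<open>a = c\<^sub>1/R\<close>, \<open>|a| > 1\<close>, an injective function of
  \<open>cos \<lambda>t\<close>. Hence \<open>f(P) = f(0)\<close> forces \<open>cos \<lambda>P = 1\<close>; comparing first coordinates then forces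
  \<open>cos (P/R) = 1\<close>. So a period \<open>P\<close> makes both \<open>\<lambda>P\<close> and \<open>P/R\<close> integer multiples of \<open>2\<pi>\<close>, and
  their quotient \<open>\<lambda>R = \<surd>(1 - R\<^sup>2)\<close> is rational. Conversely, if \<open>\<surd>(1 - R\<^sup>2) = p/q\<close>, then
  \<open>P = 2\<pi>Rq\<close> is such a period.\<close>

lemma tractrix_denominator_nonzero:
  fixes R c1 u :: real
  assumes "0 < R" "R < \<bar>c1\<bar>"
  shows "c1 / R + cos u \<noteq> 0"
proof -
  have "\<bar>c1 / R\<bar> > 1" using assms by (simp add: abs_divide less_divide_eq)
  then show ?thesis using abs_cos_le_one[of u] by linarith
qed

lemma one_le_abs_if_square_diff_eq_one:
  fixes c1 c2 :: real
  assumes "c1\<^sup>2 - c2\<^sup>2 = 1"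
  shows "1 \<le> \<bar>c1\<bar>"
proof -
  have "1 \<le> c1\<^sup>2" using assms zero_le_power2[of c2] by linarith
  then show ?thesis using abs_le_square_iff[of 1 c1] by simp
qed

lemma tr_lambda_squared:
  fixes R :: real
  assumes "R\<^sup>2 \<le> 1"
  shows "(tr_lambda R)\<^sup>2 = (1 - R\<^sup>2) / R\<^sup>2"
  using assms unfolding tr_lambda_def by (simp add: power_divide)

lemma tractrix_xi_sum_squares:
  fixes R c1 c2 t :: real
  assumes "0 < R" "R\<^sup>2 \<le> 1" "c1\<^sup>2 - c2\<^sup>2 = 1"
    and denom: "c1 / R + cos (tr_lambda R * t) \<noteq> 0"
  shows "(tr_xi1 R c1 t)\<^sup>2 + (tr_xi2 R c1 t)\<^sup>2 + (tr_xi3 R c1 c2 t)\<^sup>2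
     = (1 - R\<^sup>2) * (c1 / R - cos (tr_lambda R * t)) / (c1 / R + cos (tr_lambda R * t))"
proof -
  define x where "x = cos (tr_lambda R * t)"
  define d where "d = c1 / R + x"
  have "d \<noteq> 0" using denom unfolding d_def x_def .
  have sin_sq: "(sin (tr_lambda R * t))\<^sup>2 = 1 - x\<^sup>2" unfolding x_def by (simp add: sin_squared_eq)
  have "(tr_xi1 R c1 t)\<^sup>2 + (tr_xi2 R c1 t)\<^sup>2 + (tr_xi3 R c1 c2 t)\<^sup>2
      = ((R - 1/R)\<^sup>2 * x\<^sup>2 + (tr_lambda R)\<^sup>2 * (1 - x\<^sup>2) + (tr_lambda R)\<^sup>2 * c2\<^sup>2) / d\<^sup>2"
    unfolding tr_xi1_def tr_xi2_def tr_xi3_def d_def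
    by (simp add: power_divide power_mult_distrib add_divide_distrib sin_sq x_def)
  also have "(R - 1/R)\<^sup>2 * x\<^sup>2 + (tr_lambda R)\<^sup>2 * (1 - x\<^sup>2) + (tr_lambda R)\<^sup>2 * c2\<^sup>2
      = (1 - R\<^sup>2) * (c1 / R - x) * d"
    using assms(1,3) unfolding tr_lambda_squared[OF assms(2)] d_def
    by (simp add: field_simps power2_eq_square)
  finally show ?thesis using \<open>d \<noteq> 0\<close> unfolding d_def x_def by (simp add: power2_eq_square)
qed

lemma circular_tractrix_sum_squares:
  "(fst (circular_tractrix R c1 c2 t))\<^sup>2 + (fst (snd (circular_tractrix R c1 c2 t)))\<^sup>2
     + (snd (snd (circular_tractrix R c1 c2 t)))\<^sup>2
   = (tr_xi1 R c1 t)\<^sup>2 + (tr_xi2 R c1 t)\<^sup>2 + (tr_xi3 R c1 c2 t)\<^sup>2"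
proof -
  have rotation: "(A * c + B * s)\<^sup>2 + (- B * c + A * s)\<^sup>2 = (A\<^sup>2 + B\<^sup>2) * (c\<^sup>2 + s\<^sup>2)"
    for A B c s :: real
    by (simp add: algebra_simps power2_eq_square)
  show ?thesis
    unfolding circular_tractrix_def fst_conv snd_conv rotation sin_cos_squared_add2 by simp
qed

lemma circular_tractrix_return_cos_lambda:
  fixes R c1 c2 P :: real
  assumes "0 < R" "R < 1" "c1\<^sup>2 - c2\<^sup>2 = 1"
    and return: "circular_tractrix R c1 c2 P = circular_tractrix R c1 c2 0"
  shows "cos (tr_lambda R * P) = 1"
proof -
  define a where "a = c1 / R"
  define x where "x = cos (tr_lambda R * P)"
  have "R < \<bar>c1\<bar>" using one_le_abs_if_square_diff_eq_one[OF assms(3)] assms(2) by linarith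
  have denom: "a + cos (tr_lambda R * t) \<noteq> 0" for t
    unfolding a_def using tractrix_denominator_nonzero[OF assms(1) \<open>R < \<bar>c1\<bar>\<close>] .
  have "a \<noteq> 0" using \<open>R < \<bar>c1\<bar>\<close> assms(1) unfolding a_def by auto
  have "R\<^sup>2 < 1" using assms(1,2) by (simp add: power_less_one_iff)
  have "(1 - R\<^sup>2) * (a - x) / (a + x) = (1 - R\<^sup>2) * (a - 1) / (a + 1)"
    using tractrix_xi_sum_squares[OF assms(1) less_imp_le[OF \<open>R\<^sup>2 < 1\<close>] assms(3), of P]
      tractrix_xi_sum_squares[OF assms(1) less_imp_le[OF \<open>R\<^sup>2 < 1\<close>] assms(3), of 0]
      circular_tractrix_sum_squares[of R c1 c2 P] circular_tractrix_sum_squares[of R c1 c2 0]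
      denom[of P] denom[of 0] return
    unfolding a_def x_def by simp
  then have "(a - x) / (a + x) = (a - 1) / (a + 1)"
    using \<open>R\<^sup>2 < 1\<close>
    by (simp add: mult_divide_mult_cancel_left_if times_divide_eq_right[symmetric]
        del: times_divide_eq_right)
  then have "(a - x) * (a + 1) = (a - 1) * (a + x)"
    using denom[of P] denom[of 0] unfolding x_def by (simp add: field_simps)
  then have "2 * a * (1 - x) = 0" by (simp add: algebra_simps)
  then show ?thesis using \<open>a \<noteq> 0\<close> unfolding x_def by simp
qed

lemma circular_tractrix_return_cos_rotation:
  fixes R c1 c2 P :: real
  assumes "0 < R" "R < 1" "c1\<^sup>2 - c2\<^sup>2 = 1"
    and return: "circular_tractrix R c1 c2 P = circular_tractrix R c1 c2 0"
  shows "cos (P / R) = 1"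
proof -
  have cos_lambda: "cos (tr_lambda R * P) = 1"
    using circular_tractrix_return_cos_lambda[OF assms] .
  then have sin_lambda: "sin (tr_lambda R * P) = 0"
    using sin_cos_squared_add[of "tr_lambda R * P"] by simp
  define A where "A = tr_xi1 R c1 0"
  have "tr_xi1 R c1 P = A" "tr_xi2 R c1 P = 0" "tr_xi2 R c1 0 = 0"
    unfolding A_def tr_xi1_def tr_xi2_def using cos_lambda sin_lambda by simp_all
  then have "A * cos (P / R) = A"
    using arg_cong[OF return, of fst] unfolding circular_tractrix_def A_def by simp
  moreover have "A \<noteq> 0"
  proof -
    have "c1 / R + 1 \<noteq> 0"
      using tractrix_denominator_nonzero[OF assms(1), of c1 0]
        one_le_abs_if_square_diff_eq_one[OF assms(3)] assms(2) by simp
    moreover have "R - 1 / R \<noteq> 0"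
      using assms(1,2) mult_strict_mono[of R 1 R 1] by (simp add: field_simps)
    ultimately show ?thesis unfolding A_def tr_xi1_def by simp
  qed
  ultimately show ?thesis by simp
qed

lemma circular_tractrix_periodic:
  fixes R c1 c2 P t :: real and m n :: int
  assumes "tr_lambda R * P = 2 * pi * of_int n" "P / R = 2 * pi * of_int m"
  shows "circular_tractrix R c1 c2 (t + P) = circular_tractrix R c1 c2 t"
proof -
  have shift_lambda: "tr_lambda R * (t + P) = tr_lambda R * t + 2 * pi * of_int n"
    using assms(1) by (simp add: distrib_left)
  have shift_rotation: "(t + P) / R = t / R + 2 * pi * of_int m"
    using assms(2) by (simp add: add_divide_distrib)
  have "cos (y + 2 * pi * of_int k) = cos y" "sin (y + 2 * pi * of_int k) = sin y"
    for y :: real and k :: int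
    by (simp_all add: cos_add sin_add)
  then show ?thesis
    unfolding circular_tractrix_def tr_xi1_def tr_xi2_def tr_xi3_def shift_lambda shift_rotation
    by simp
qed

theorem mainTheorem13:
  fixes R c1 c2 :: real
  assumes "0 < R" and "R < 1" and "c1\<^sup>2 - c2\<^sup>2 = 1"
  shows "(\<exists>P>0. \<forall>t. circular_tractrix R c1 c2 (t + P) = circular_tractrix R c1 c2 t)
         \<longleftrightarrow> sqrt (1 - R\<^sup>2) \<in> \<rat>"
proof
  assume "\<exists>P>0. \<forall>t. circular_tractrix R c1 c2 (t + P) = circular_tractrix R c1 c2 t"
  then obtain P where "P > 0" and "circular_tractrix R c1 c2 P = circular_tractrix R c1 c2 0"
    by (metis add_0)
  with assms obtain m n :: int
    where m: "P / R = of_int m * 2 * pi" and n: "tr_lambda R * P = of_int n * 2 * pi"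
    using circular_tractrix_return_cos_rotation circular_tractrix_return_cos_lambda
      cos_one_2pi_int by metis
  have "m \<noteq> 0" using m \<open>P > 0\<close> assms(1) by auto
  have "sqrt (1 - R\<^sup>2) * (P / R) = tr_lambda R * P" unfolding tr_lambda_def by simp
  then have "sqrt (1 - R\<^sup>2) = of_int n / of_int m" using m n \<open>m \<noteq> 0\<close> by (simp add: field_simps)
  then show "sqrt (1 - R\<^sup>2) \<in> \<rat>" by simp
next
  assume "sqrt (1 - R\<^sup>2) \<in> \<rat>"
  then obtain p q :: int where "q > 0" and pq: "sqrt (1 - R\<^sup>2) = of_int p / of_int q"
    using Rats_cases' by metis
  define P where "P = 2 * pi * R * of_int q"
  have "tr_lambda R * P = 2 * pi * of_int p" "P / R = 2 * pi * of_int q"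
    unfolding P_def tr_lambda_def pq using \<open>q > 0\<close> assms(1) by (simp_all add: field_simps)
  moreover have "P > 0" unfolding P_def using \<open>q > 0\<close> assms(1) by simp
  ultimately show "\<exists>P>0. \<forall>t. circular_tractrix R c1 c2 (t + P) = circular_tractrix R c1 c2 t"
    using circular_tractrix_periodic by blast
qed

end
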